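(* Let $n\ge 1$. The map $\phi$ described below is a well-defined bijection from $\mathcal{I}_n(\underline{000})$ onto the disjoint union $\overline{\mathcal{D}}_n\sqcup\overline{\mathcal{D}}_{n-1}$. In particular, $|\mathcal{I}_n(\underline{000})|=\overline{d}_n+\overline{d}_{n-1}=(n!-d_n)+((n-1)!-d_{n-1})$. Definition of $\phi$. Let $e=e_1e_2\dots e_n\in\mathcal{I}_n(\underline{000})$. First define a word $w=w_2\dots w_n$ by, for $2\le k\le n$: $w_k=R$ if $e_k=e_{k-1}$; $w_k=e_k$ if $e_k>e_{k-1}$; $w_k=e_k+1$ if $e_k<e_{k-1}$. (Here $R$ is a new symbol; use the convention that $w_1\neq R$.) Next define permutations $\sigma_1,\dots,\sigma_n$: set $\sigma_1=1\in\overline{\mathcal{D}}_1$. For $k=2,\dots,n$: if $w_k=R$, set $\sigma_k=\sigma_{k-1}$ (regarded as an element of $\overline{\mathcal{D}}_{k-1}$). If $w_k\neq R$, then $$\sigma_k=\begin{cases}(w_k,k)\,\sigma_{k-1} & \text{if } w_{k-1}\neq R \text{ and } \sigma_{k-1}\in\overline{\mathcal{D}}_{k-1}\text{ has a fixed point different from } w_k,\\ (w_k,k-1)\,\sigma_{k-1} & \text{otherwise,}\end{cases}$$ where on the right-hand side $\sigma_{k-1}$ is viewed as an element of $\mathfrak{S}_k$ (by adding fixed points), and $\sigma_k$ is regarded as an element of $\overline{\mathcal{D}}_k$. Finally $\phi(e)=\sigma_n$, regarded as an element of $\overline{\mathcal{D}}_n$ if $w_n\neq R$ and of $\overline{\mathcal{D}}_{n-1}$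 if $w_n=R$.
   Context: $\mathfrak{S}_n$ is the set of permutations of $[n]=\{1,\dots,n\}$; $\mathfrak{S}_{m}$ is viewed as the subset of $\mathfrak{S}_n$ ($m\le n$) of permutations fixing $m+1,\dots,n$. A fixed point of $\pi$ is $i$ with $\pi(i)=i$. A derangement is a permutation with no fixed points; $d_n$ is the number of derangements in $\mathfrak{S}_n$ (with $d_0=1$). $\overline{\mathcal{D}}_n$ is the set of permutations in $\mathfrak{S}_n$ having at least one fixed point, and $\overline{d}_n=|\overline{\mathcal{D}}_n|=n!-d_n$ (so $\overline{\mathcal{D}}_0=\emptyset$). An inversion sequence of length $n$ is an integer sequence $e_1\dots e_n$ with $0\le e_i<i$ for all $i$; $\mathcal{I}_n(\underline{000})$ is the set of those with no $i\in[n-2]$ such that $e_i=e_{i+1}=e_{i+2}$. For $1\le a,b\le n$, $(a,b)$ denotes the permutation of $[n]$ exchanging $a$ and $b$ (the identity if $a=b$), and $(a,b)\sigma$ is the composition, i.e. the one-line notation of $\sigma$ with the values $a$ and $b$ swapped. *)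

theory Defs
  imports "HOL-Combinatorics.Combinatorics"
begin

(* Inversion sequences e_1..e_n are lists of length n; e_k = e ! (k-1), and 0 <= e_k < k. *)
definition inv_seq_000 :: "nat \<Rightarrow> nat list set" where
  "inv_seq_000 n = {e. length e = n \<and> (\<forall>i<n. e ! i \<le> i)
      \<and> (\<forall>i. i + 2 < n \<longrightarrow> \<not> (e ! i = e ! (i+1) \<and> e ! (i+1) = e ! (i+2)))}"

definition Dbar :: "nat \<Rightarrow> (nat \<Rightarrow> nat) set" where
  "Dbar n = {\<sigma>. \<sigma> permutes {1..n} \<and> (\<exists>i\<in>{1..n}. \<sigma> i = i)}"

definition derangements :: "nat \<Rightarrow> (nat \<Rightarrow> nat) set" where
  "derangements n = {\<sigma>. \<sigma> permutes {1..n} \<and> (\<forall>i\<in>{1..n}. \<sigma> i \<noteq> i)}"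

definition dn :: "nat \<Rightarrow> nat" where
  "dn n = card (derangements n)"

(* the letter w_k: None stands for the symbol R; w_1 is a (non-R) dummy value *)
definition wl :: "nat list \<Rightarrow> nat \<Rightarrow> nat option" where
  "wl e k = (if k \<le> 1 then Some 0 else
     (let a = e ! (k-1); b = e ! (k-2) in
      if a = b then None else if a > b then Some a else Some (a+1)))"

(* sig e k = sigma_k, a function on nat fixing everything outside [k];
   (a,b) sigma = transpose a b o sigma (swap the values a and b) *)
primrec sig :: "nat list \<Rightarrow> nat \<Rightarrow> (nat \<Rightarrow> nat)" where
  "sig e 0 = id"
| "sig e (Suc k) = (if k = 0 then id else
     (let s = sig e k in
      case wl e (Suc k) of
        None \<Rightarrow> s
      | Some a \<Rightarrow> (if wl e k \<noteq> None \<and> (\<exists>i\<in>{1..k}. s i = i \<and> i \<noteq> a)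
                   then transpose a (Suc k) \<circ> s
                   else transpose a k \<circ> s)))"

(* phi: Inl sigma means sigma in Dbar n, Inr sigma means sigma in Dbar (n-1) *)
definition phi :: "nat \<Rightarrow> nat list \<Rightarrow> (nat \<Rightarrow> nat) + (nat \<Rightarrow> nat)" where
  "phi n e = (if wl e n = None then Inr (sig e n) else Inl (sig e n))"

end

theory Submission
  imports Defs
begin

(* Appending an entry to e in I_n(000) either repeats its last entry, giving the letter
   w_(n+1) = R, which is allowed only when w_n is not R, or yields an arbitrary letter
   w_(n+1) in [n].  So the sequences of length n+1 ending in R correspond to the sequences of
   length n not ending in R, and the others to I_n(000) x [n].  On the permutation side,
   one recursion step of sigma is a bijection (Dbar n + Dbar (n - 1)) x [n] -> Dbar (n + 1).
   By induction, sigma_n maps the sequences not ending in R bijectively onto Dbar n and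
   those ending in R onto Dbar (n - 1). *)

abbreviation Dbar_sum :: "nat \<Rightarrow> ((nat \<Rightarrow> nat) + (nat \<Rightarrow> nat)) set" where
  "Dbar_sum n \<equiv> Inl ` Dbar n \<union> Inr ` Dbar (n - 1)"

(* One recursion step of sig: the tag Inl/Inr of phi records whether w_n is a letter or R. *)
fun extend_dbar :: "nat \<Rightarrow> ((nat \<Rightarrow> nat) + (nat \<Rightarrow> nat)) \<times> nat \<Rightarrow> nat \<Rightarrow> nat" where
  "extend_dbar n (Inl s, a) =
     (if \<exists>i\<in>{1..n}. s i = i \<and> i \<noteq> a then transpose a (Suc n) \<circ> s else transpose a n \<circ> s)"
| "extend_dbar n (Inr s, a) = transpose a n \<circ> s"

(* If sigma moves n+1, it comes from the first branch of extend_dbar.  Otherwise sigma = (a, n) s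
   either with a = sigma n and s in Dbar (n - 1), or with a = inv sigma n the only fixed point of
   s in Dbar n; the first case occurs iff (sigma n, n) sigma has a fixed point below n, which is
   the condition tested. *)
definition split_dbar :: "nat \<Rightarrow> (nat \<Rightarrow> nat) \<Rightarrow> ((nat \<Rightarrow> nat) + (nat \<Rightarrow> nat)) \<times> nat" where
  "split_dbar n \<sigma> =
     (if \<sigma> (Suc n) \<noteq> Suc n then (Inl (transpose (\<sigma> (Suc n)) (Suc n) \<circ> \<sigma>), \<sigma> (Suc n))
      else if (\<exists>i\<in>{1..n-1}. \<sigma> i = i) \<or> (\<sigma> (\<sigma> n) = n \<and> \<sigma> n \<noteq> n)
      then (Inr (transpose (\<sigma> n) n \<circ> \<sigma>), \<sigma> n)
      else (Inl (transpose (inv \<sigma> n) n \<circ> \<sigma>), inv \<sigma> n))"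

lemma transpose_comp_cancel [simp]: "transpose a b \<circ> (transpose a b \<circ> s) = s"
  by (simp flip: comp_assoc)

lemma transpose_comp_fixed_iff: "(transpose a b \<circ> s) i = i \<longleftrightarrow> s i = transpose a b i"
  by (metis comp_apply transpose_involutory)

lemma transpose_comp_permutes:
  "s permutes S \<Longrightarrow> S \<subseteq> T \<Longrightarrow> a \<in> T \<Longrightarrow> b \<in> T \<Longrightarrow> transpose a b \<circ> s permutes T"
  by (meson permutes_compose permutes_subset permutes_swap_id)

lemma permutes_fix_last: "p permutes {1..Suc n} \<Longrightarrow> p (Suc n) = Suc n \<Longrightarrow> p permutes {1..n}"
  by (rule permutes_superset) (auto simp: le_Suc_eq)

lemma extend_dbar_Inl_moved:
  assumes s: "s \<in> Dbar n" and a: "a \<in> {1..n}" and i: "i \<in> {1..n}" "s i = i" "i \<noteq> a"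
  defines "\<sigma> \<equiv> extend_dbar n (Inl s, a)"
  shows "\<sigma> \<in> Dbar (Suc n)" and "split_dbar n \<sigma> = (Inl s, a)"
proof -
  have sp: "s permutes {1..n}" using s by (simp add: Dbar_def)
  have \<sigma>: "\<sigma> = transpose a (Suc n) \<circ> s" using i by (auto simp: \<sigma>_def)
  have "\<sigma> permutes {1..Suc n}" unfolding \<sigma> using sp a by (auto intro: transpose_comp_permutes)
  moreover have "\<sigma> i = i" using i by (simp add: \<sigma>)
  ultimately show "\<sigma> \<in> Dbar (Suc n)" using i by (auto simp: Dbar_def)
  have "\<sigma> (Suc n) = a" using permutes_not_in[OF sp, of "Suc n"] by (simp add: \<sigma>)
  then show "split_dbar n \<sigma> = (Inl s, a)" using a by (simp add: split_dbar_def \<sigma>)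
qed

lemma extend_dbar_Inl_unique_fixed:
  assumes s: "s \<in> Dbar n" and a: "a \<in> {1..n}" and unique: "\<forall>i\<in>{1..n}. s i = i \<longrightarrow> i = a"
  defines "\<sigma> \<equiv> extend_dbar n (Inl s, a)"
  shows "\<sigma> \<in> Dbar (Suc n)" and "split_dbar n \<sigma> = (Inl s, a)"
proof -
  have sp: "s permutes {1..n}" and sa: "s a = a" using s unique by (auto simp: Dbar_def)
  have \<sigma>: "\<sigma> = transpose a n \<circ> s" using unique by (auto simp: \<sigma>_def)
  have \<sigma>p: "\<sigma> permutes {1..Suc n}" unfolding \<sigma> using sp a by (auto intro: transpose_comp_permutes)
  have \<sigma>_Suc: "\<sigma> (Suc n) = Suc n" using permutes_not_in[OF sp, of "Suc n"] a by (simp add: \<sigma>)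
  with \<sigma>p show "\<sigma> \<in> Dbar (Suc n)" by (auto simp: Dbar_def)
  have \<sigma>a: "\<sigma> a = n" using sa by (simp add: \<sigma>)
  have no_fixed: "\<not> (\<exists>i\<in>{1..n-1}. \<sigma> i = i)"
  proof
    assume "\<exists>i\<in>{1..n-1}. \<sigma> i = i"
    then obtain i where i: "i \<in> {1..n-1}" "\<sigma> i = i" by blast
    then have "i \<noteq> a" "i \<noteq> n" using \<sigma>a by auto
    with i(2) have "s i = i" unfolding \<sigma> transpose_comp_fixed_iff by simp
    then show False using unique i \<open>i \<noteq> a\<close> by auto
  qed
  have "\<not> (\<sigma> (\<sigma> n) = n \<and> \<sigma> n \<noteq> n)"
  proof
    assume *: "\<sigma> (\<sigma> n) = n \<and> \<sigma> n \<noteq> n"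
    then have "\<sigma> (\<sigma> n) = \<sigma> a" using \<sigma>a by simp
    then have "\<sigma> n = a" using permutes_inj[OF \<sigma>p] by (simp add: inj_eq)
    moreover have "s n = transpose a n (\<sigma> n)" by (simp add: \<sigma>)
    ultimately have "s n = n" by simp
    moreover have "n \<in> {1..n}" using a by simp
    ultimately have "n = a" using unique by blast
    with * \<open>\<sigma> n = a\<close> show False by simp
  qed
  moreover have "inv \<sigma> n = a" using \<sigma>a permutes_inv_eq[OF \<sigma>p] by simp
  moreover have "transpose a n \<circ> \<sigma> = s" by (simp add: \<sigma>)
  ultimately show "split_dbar n \<sigma> = (Inl s, a)" using no_fixed \<sigma>_Suc by (simp add: split_dbar_def)
qed

lemma extend_dbar_Inr:
  assumes n: "1 \<le> n" and s: "s \<in> Dbar (n - 1)" and a: "a \<in> {1..n}"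
  defines "\<sigma> \<equiv> extend_dbar n (Inr s, a)"
  shows "\<sigma> \<in> Dbar (Suc n)" and "split_dbar n \<sigma> = (Inr s, a)"
proof -
  obtain f where sp: "s permutes {1..n-1}" and f: "f \<in> {1..n-1}" "s f = f"
    using s by (auto simp: Dbar_def)
  have \<sigma>: "\<sigma> = transpose a n \<circ> s" by (simp add: \<sigma>_def)
  have \<sigma>p: "\<sigma> permutes {1..Suc n}" unfolding \<sigma> by (rule transpose_comp_permutes[OF sp]) (use a in auto)
  have "s n = n" "s (Suc n) = Suc n" using permutes_not_in[OF sp] n by auto
  then have \<sigma>_Suc: "\<sigma> (Suc n) = Suc n" and \<sigma>n: "\<sigma> n = a" using a by (auto simp: \<sigma>)
  from \<sigma>_Suc \<sigma>p show "\<sigma> \<in> Dbar (Suc n)" by (auto simp: Dbar_def)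
  have "(\<exists>i\<in>{1..n-1}. \<sigma> i = i) \<or> (\<sigma> (\<sigma> n) = n \<and> \<sigma> n \<noteq> n)"
  proof (cases "f = a")
    case True
    then show ?thesis using f \<sigma>n by (auto simp: \<sigma>)
  next
    case False
    then have "\<sigma> f = f" using f by (auto simp: \<sigma>)
    then show ?thesis using f(1) by blast
  qed
  then show "split_dbar n \<sigma> = (Inr s, a)" using \<sigma>_Suc \<sigma>n by (simp add: split_dbar_def \<sigma>)
qed

lemma split_dbar_moved:
  assumes \<sigma>: "\<sigma> \<in> Dbar (Suc n)" and moved: "\<sigma> (Suc n) \<noteq> Suc n"
  shows "split_dbar n \<sigma> \<in> Dbar_sum n \<times> {1..n}" and "extend_dbar n (split_dbar n \<sigma>) = \<sigma>"
proof -
  define a where "a = \<sigma> (Suc n)"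
  define s where "s = transpose a (Suc n) \<circ> \<sigma>"
  obtain i where \<sigma>p: "\<sigma> permutes {1..Suc n}" and i: "i \<in> {1..Suc n}" "\<sigma> i = i"
    using \<sigma> by (auto simp: Dbar_def)
  have a: "a \<in> {1..n}" using permutes_in_image[OF \<sigma>p, of "Suc n"] moved by (auto simp: a_def)
  have "i \<noteq> Suc n" "i \<noteq> a" using i moved permutes_inj[OF \<sigma>p] by (auto simp: a_def dest: injD)
  then have i': "i \<in> {1..n}" "s i = i" using i by (auto simp: s_def)
  have "s permutes {1..n}"
    by (rule permutes_fix_last, unfold s_def, rule transpose_comp_permutes[OF \<sigma>p])
       (use a in \<open>auto simp: a_def\<close>)
  with i' have "s \<in> Dbar n" by (auto simp: Dbar_def)
  have split: "split_dbar n \<sigma> = (Inl s, a)" using moved by (simp add: split_dbar_def s_def a_def)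
  with \<open>s \<in> Dbar n\<close> a show "split_dbar n \<sigma> \<in> Dbar_sum n \<times> {1..n}" by simp
  have "\<exists>i\<in>{1..n}. s i = i \<and> i \<noteq> a" using i' \<open>i \<noteq> a\<close> by blast
  moreover have "transpose a (Suc n) \<circ> s = \<sigma>" by (simp add: s_def)
  ultimately show "extend_dbar n (split_dbar n \<sigma>) = \<sigma>" by (simp add: split)
qed

lemma split_dbar_Inr:
  assumes n: "1 \<le> n" and \<sigma>: "\<sigma> \<in> Dbar (Suc n)" and fixed: "\<sigma> (Suc n) = Suc n"
    and fixed_below: "(\<exists>i\<in>{1..n-1}. \<sigma> i = i) \<or> (\<sigma> (\<sigma> n) = n \<and> \<sigma> n \<noteq> n)"
  shows "split_dbar n \<sigma> \<in> Dbar_sum n \<times> {1..n}" and "extend_dbar n (split_dbar n \<sigma>) = \<sigma>"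
proof -
  define a where "a = \<sigma> n"
  define s where "s = transpose a n \<circ> \<sigma>"
  have \<sigma>p: "\<sigma> permutes {1..Suc n}" using \<sigma> by (simp add: Dbar_def)
  have inj: "inj \<sigma>" using permutes_inj[OF \<sigma>p] .
  have "a \<noteq> Suc n" using fixed inj by (metis a_def injD n_not_Suc_n)
  then have a: "a \<in> {1..n}" using permutes_in_image[OF \<sigma>p, of n] n by (auto simp: a_def)
  have "s (Suc n) = Suc n" "s n = n" using fixed \<open>a \<noteq> Suc n\<close> by (auto simp: s_def a_def)
  have "s permutes {1..n}"
    by (rule permutes_fix_last, unfold s_def, rule transpose_comp_permutes[OF \<sigma>p])
       (use a \<open>s (Suc n) = Suc n\<close> in \<open>auto simp: s_def\<close>)
  then have "s permutes {1..n-1}" using permutes_fix_last[of s "n - 1"] \<open>s n = n\<close> n by simp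
  moreover have "\<exists>i\<in>{1..n-1}. s i = i"
    using fixed_below
  proof
    assume "\<exists>i\<in>{1..n-1}. \<sigma> i = i"
    then obtain i where i: "i \<in> {1..n-1}" "\<sigma> i = i" by blast
    then have "i \<noteq> n" by auto
    then have "i \<noteq> a" using i(2) inj by (auto simp: a_def inj_eq)
    with i \<open>i \<noteq> n\<close> have "s i = i" by (simp add: s_def)
    with i(1) show ?thesis by blast
  next
    assume "\<sigma> (\<sigma> n) = n \<and> \<sigma> n \<noteq> n"
    then have "s a = a" "a \<in> {1..n-1}" using a by (auto simp: s_def a_def)
    then show ?thesis by blast
  qed
  ultimately have "s \<in> Dbar (n - 1)" by (simp add: Dbar_def)
  have split: "split_dbar n \<sigma> = (Inr s, a)"
    using fixed fixed_below by (simp add: split_dbar_def s_def a_def)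
  with \<open>s \<in> Dbar (n - 1)\<close> a show "split_dbar n \<sigma> \<in> Dbar_sum n \<times> {1..n}" by simp
  show "extend_dbar n (split_dbar n \<sigma>) = \<sigma>" by (simp add: split s_def)
qed

lemma split_dbar_Inl_unique_fixed:
  assumes n: "1 \<le> n" and \<sigma>: "\<sigma> \<in> Dbar (Suc n)" and fixed: "\<sigma> (Suc n) = Suc n"
    and no_fixed_below: "\<not> ((\<exists>i\<in>{1..n-1}. \<sigma> i = i) \<or> (\<sigma> (\<sigma> n) = n \<and> \<sigma> n \<noteq> n))"
  shows "split_dbar n \<sigma> \<in> Dbar_sum n \<times> {1..n}" and "extend_dbar n (split_dbar n \<sigma>) = \<sigma>"
proof -
  define b where "b = inv \<sigma> n"
  define s where "s = transpose b n \<circ> \<sigma>"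
  have \<sigma>p: "\<sigma> permutes {1..Suc n}" using \<sigma> by (simp add: Dbar_def)
  have \<sigma>b: "\<sigma> b = n" using permutes_inverses(1)[OF \<sigma>p] by (simp add: b_def)
  have "b \<noteq> Suc n" using \<sigma>b fixed by auto
  then have b: "b \<in> {1..n}" using permutes_in_image[OF \<sigma>p, of b] \<sigma>b n by auto
  have "s permutes {1..n}"
    by (rule permutes_fix_last, unfold s_def, rule transpose_comp_permutes[OF \<sigma>p])
       (use b fixed \<open>b \<noteq> Suc n\<close> in auto)
  moreover have "s b = b" using \<sigma>b by (simp add: s_def)
  ultimately have "s \<in> Dbar n" using b by (auto simp: Dbar_def)
  have split: "split_dbar n \<sigma> = (Inl s, b)"
    using fixed no_fixed_below by (simp add: split_dbar_def s_def b_def)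
  with \<open>s \<in> Dbar n\<close> b show "split_dbar n \<sigma> \<in> Dbar_sum n \<times> {1..n}" by simp
  have "\<not> (\<exists>i\<in>{1..n}. s i = i \<and> i \<noteq> b)"
  proof
    assume "\<exists>i\<in>{1..n}. s i = i \<and> i \<noteq> b"
    then obtain i where i: "i \<in> {1..n}" "s i = i" "i \<noteq> b" by blast
    show False
    proof (cases "i = n")
      case True
      then have "\<sigma> n = b" using i(2) unfolding s_def transpose_comp_fixed_iff by simp
      then show False using no_fixed_below \<sigma>b i(3) True by auto
    next
      case False
      then have "\<sigma> i = i" using i(2,3) unfolding s_def transpose_comp_fixed_iff by simp
      then show False using no_fixed_below i False by auto
    qed
  qed
  moreover have "transpose b n \<circ> s = \<sigma>" by (simp add: s_def)
  ultimately show "extend_dbar n (split_dbar n \<sigma>) = \<sigma>" by (auto simp: split)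
qed

lemma extend_dbar_mem_inverse:
  assumes n: "1 \<le> n" and x: "x \<in> Dbar_sum n \<times> {1..n}"
  shows "extend_dbar n x \<in> Dbar (Suc n) \<and> split_dbar n (extend_dbar n x) = x"
proof -
  obtain y a where x: "x = (y, a)" and y: "y \<in> Dbar_sum n" and a: "a \<in> {1..n}" using x by auto
  show ?thesis
  proof (cases y)
    case (Inl s)
    then have s: "s \<in> Dbar n" using y by auto
    show ?thesis
    proof (cases "\<exists>i\<in>{1..n}. s i = i \<and> i \<noteq> a")
      case True
      then show ?thesis using extend_dbar_Inl_moved[OF s a] unfolding x Inl by blast
    next
      case False
      then show ?thesis using extend_dbar_Inl_unique_fixed[OF s a] unfolding x Inl by blast
    qed
  next
    case (Inr s)
    then show ?thesis using extend_dbar_Inr[OF n _ a] y x by auto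
  qed
qed

lemma split_dbar_mem_inverse:
  assumes n: "1 \<le> n" and \<sigma>: "\<sigma> \<in> Dbar (Suc n)"
  shows "split_dbar n \<sigma> \<in> Dbar_sum n \<times> {1..n} \<and> extend_dbar n (split_dbar n \<sigma>) = \<sigma>"
proof (cases "\<sigma> (Suc n) = Suc n")
  case True
  then show ?thesis using split_dbar_Inr[OF n \<sigma> True] split_dbar_Inl_unique_fixed[OF n \<sigma> True] by blast
next
  case False
  then show ?thesis using split_dbar_moved[OF \<sigma>] by blast
qed

lemma extend_dbar_bij:
  assumes n: "1 \<le> n"
  shows "bij_betw (extend_dbar n) (Dbar_sum n \<times> {1..n}) (Dbar (Suc n))"
  using extend_dbar_mem_inverse[OF n] split_dbar_mem_inverse[OF n]
  by (intro bij_betw_byWitness[where f' = "split_dbar n"]) (simp_all add: image_subset_iff)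

lemma last_eq_nth_pred: "length e = n \<Longrightarrow> 1 \<le> n \<Longrightarrow> last e = e ! (n - 1)"
  by (cases e rule: rev_cases) auto

lemma inv_seq_000_length: "e \<in> inv_seq_000 n \<Longrightarrow> length e = n"
  by (simp add: inv_seq_000_def)

lemma inv_seq_000_last_less:
  assumes "e \<in> inv_seq_000 n" and "1 \<le> n"
  shows "last e < n"
proof -
  have "length e = n" using assms(1) by (rule inv_seq_000_length)
  then have "last e = e ! (n - 1)" using assms(2) by (rule last_eq_nth_pred)
  moreover have "e ! (n - 1) \<le> n - 1" using assms by (auto simp: inv_seq_000_def)
  ultimately show ?thesis using assms(2) by linarith
qed

lemma inv_seq_000_SucE:
  assumes "e \<in> inv_seq_000 (Suc n)"
  obtains e' x where "e = e' @ [x]" and "length e' = n"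
  using inv_seq_000_length[OF assms] by (metis length_Suc_conv_rev)

lemma wl_None_iff: "wl e k = None \<longleftrightarrow> 2 \<le> k \<and> e ! (k - 1) = e ! (k - 2)"
  by (auto simp: wl_def Let_def)

lemma wl_append: "k \<le> length e \<Longrightarrow> wl (e @ xs) k = wl e k"
  by (auto simp: wl_def Let_def nth_append)

lemma wl_snoc:
  "length e = n \<Longrightarrow> 1 \<le> n \<Longrightarrow>
   wl (e @ [x]) (Suc n) = (if x = last e then None else if last e < x then Some x else Some (x + 1))"
  by (cases e rule: rev_cases) (auto simp: wl_def nth_append Let_def)

lemma all_add_2_less_Suc:
  "(\<forall>i. i + 2 < Suc n \<longrightarrow> P i) \<longleftrightarrow> (\<forall>i. i + 2 < n \<longrightarrow> P i) \<and> (2 \<le> n \<longrightarrow> P (n - 2))"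
  by (auto simp: less_Suc_eq)

lemma inv_seq_000_snoc_iff:
  assumes len: "length e = n" and n: "1 \<le> n"
  shows "e @ [x] \<in> inv_seq_000 (Suc n) \<longleftrightarrow>
    e \<in> inv_seq_000 n \<and> x \<le> n \<and> (wl e n = None \<longrightarrow> x \<noteq> last e)"
proof -
  have "\<And>i. i < n \<Longrightarrow> (e @ [x]) ! i = e ! i" "(e @ [x]) ! n = x"
    using len by (auto simp: nth_append)
  moreover have "2 \<le> n \<Longrightarrow> n - 2 + 1 = n - 1 \<and> n - 2 + 2 = n" by auto
  moreover have "last e = e ! (n - 1)" using len n by (rule last_eq_nth_pred)
  ultimately show ?thesis
    using len unfolding inv_seq_000_def all_add_2_less_Suc All_less_Suc wl_None_iff by auto
qed

definition inv_seq_000_R :: "nat \<Rightarrow> nat list set" where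
  "inv_seq_000_R n = {e \<in> inv_seq_000 n. wl e n = None}"

definition inv_seq_000_nonR :: "nat \<Rightarrow> nat list set" where
  "inv_seq_000_nonR n = {e \<in> inv_seq_000 n. wl e n \<noteq> None}"

lemma bij_betw_butlast_R:
  assumes n: "1 \<le> n"
  shows "bij_betw butlast (inv_seq_000_R (Suc n)) (inv_seq_000_nonR n)"
proof (rule bij_betw_byWitness[where f' = "\<lambda>e. e @ [last e]"])
  have R_Suc: "\<exists>e'. e = e' @ [last e'] \<and> e' \<in> inv_seq_000_nonR n"
    if "e \<in> inv_seq_000_R (Suc n)" for e
  proof -
    from that have e: "e \<in> inv_seq_000 (Suc n)" and R: "wl e (Suc n) = None"
      by (auto simp: inv_seq_000_R_def)
    obtain e' x where e': "e = e' @ [x]" "length e' = n" using e by (rule inv_seq_000_SucE)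
    then have "x = last e'" using R wl_snoc[OF e'(2) n] by (auto split: if_splits)
    moreover have "e' \<in> inv_seq_000_nonR n"
      using e inv_seq_000_snoc_iff[OF e'(2) n] \<open>x = last e'\<close> by (auto simp: e' inv_seq_000_nonR_def)
    ultimately show ?thesis using e' by blast
  qed
  show "\<forall>e\<in>inv_seq_000_R (Suc n). butlast e @ [last (butlast e)] = e"
    using R_Suc by fastforce
  show "\<forall>e\<in>inv_seq_000_nonR n. butlast (e @ [last e]) = e" by simp
  show "butlast ` inv_seq_000_R (Suc n) \<subseteq> inv_seq_000_nonR n"
    using R_Suc by fastforce
  show "(\<lambda>e. e @ [last e]) ` inv_seq_000_nonR n \<subseteq> inv_seq_000_R (Suc n)"
  proof clarify
    fix e assume "e \<in> inv_seq_000_nonR n"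
    then have e: "e \<in> inv_seq_000 n" "wl e n \<noteq> None" by (auto simp: inv_seq_000_nonR_def)
    have len: "length e = n" using e(1) by (rule inv_seq_000_length)
    have "last e \<le> n" using inv_seq_000_last_less[OF e(1) n] by simp
    then show "e @ [last e] \<in> inv_seq_000_R (Suc n)"
      using e inv_seq_000_snoc_iff[OF len n] wl_snoc[OF len n] by (simp add: inv_seq_000_R_def)
  qed
qed

lemma bij_betw_nonR_Suc:
  assumes n: "1 \<le> n"
  shows "bij_betw (\<lambda>e. (butlast e, the (wl e (Suc n))))
           (inv_seq_000_nonR (Suc n)) (inv_seq_000 n \<times> {1..n})"
proof (rule bij_betw_byWitness[where f' = "\<lambda>(e, a). e @ [if last e < a then a else a - 1]"])
  have nonR_Suc: "\<exists>e' x. e = e' @ [x] \<and> e' \<in> inv_seq_000 n \<and> x \<le> n \<and> x \<noteq> last e'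
      \<and> wl e (Suc n) = Some (if last e' < x then x else x + 1)"
    if "e \<in> inv_seq_000_nonR (Suc n)" for e
  proof -
    from that have e: "e \<in> inv_seq_000 (Suc n)" and nonR: "wl e (Suc n) \<noteq> None"
      by (auto simp: inv_seq_000_nonR_def)
    obtain e' x where e': "e = e' @ [x]" "length e' = n" using e by (rule inv_seq_000_SucE)
    then show ?thesis
      using e nonR inv_seq_000_snoc_iff[OF e'(2) n] wl_snoc[OF e'(2) n] by (auto split: if_splits)
  qed
  show "\<forall>e\<in>inv_seq_000_nonR (Suc n).
      (\<lambda>(e, a). e @ [if last e < a then a else a - 1]) (butlast e, the (wl e (Suc n))) = e"
    using nonR_Suc by fastforce
  show "(\<lambda>e. (butlast e, the (wl e (Suc n)))) ` inv_seq_000_nonR (Suc n) \<subseteq> inv_seq_000 n \<times> {1..n}"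
    using nonR_Suc inv_seq_000_last_less[OF _ n] by fastforce
  show "\<forall>p\<in>inv_seq_000 n \<times> {1..n}.
      (\<lambda>e. (butlast e, the (wl e (Suc n)))) ((\<lambda>(e, a). e @ [if last e < a then a else a - 1]) p) = p"
    using wl_snoc[OF inv_seq_000_length n] by auto
  show "(\<lambda>(e, a). e @ [if last e < a then a else a - 1]) ` (inv_seq_000 n \<times> {1..n})
      \<subseteq> inv_seq_000_nonR (Suc n)"
    using inv_seq_000_snoc_iff[OF inv_seq_000_length n] wl_snoc[OF inv_seq_000_length n]
    by (auto simp: inv_seq_000_nonR_def)
qed

lemma sig_append: "k \<le> length e \<Longrightarrow> sig (e @ xs) k = sig e k"
proof (induction k)
  case (Suc k)
  then show ?case by (simp only: sig.simps wl_append Suc_leD)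
qed simp

lemma sig_snoc_R:
  "length e = n \<Longrightarrow> 1 \<le> n \<Longrightarrow> wl (e @ [x]) (Suc n) = None \<Longrightarrow> sig (e @ [x]) (Suc n) = sig e n"
  by (simp add: sig_append)

lemma sig_snoc_letter:
  "length e = n \<Longrightarrow> 1 \<le> n \<Longrightarrow> wl (e @ [x]) (Suc n) = Some a \<Longrightarrow>
   sig (e @ [x]) (Suc n) = extend_dbar n (phi n e, a)"
  by (auto simp: sig_append wl_append phi_def Let_def)

lemma phi_bij_betw_if_sig_bij_betw:
  assumes nonR: "bij_betw (\<lambda>e. sig e n) (inv_seq_000_nonR n) (Dbar n)"
    and R: "bij_betw (\<lambda>e. sig e n) (inv_seq_000_R n) (Dbar (n - 1))"
  shows "bij_betw (phi n) (inv_seq_000 n) (Dbar_sum n)"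
proof -
  have "bij_betw (phi n) (inv_seq_000_nonR n) (Inl ` Dbar n)"
    using bij_betw_trans[OF nonR inj_on_imp_bij_betw[of Inl]]
    by (rule bij_betw_cong[THEN iffD1, rotated]) (auto simp: phi_def inv_seq_000_nonR_def)
  moreover have "bij_betw (phi n) (inv_seq_000_R n) (Inr ` Dbar (n - 1))"
    using bij_betw_trans[OF R inj_on_imp_bij_betw[of Inr]]
    by (rule bij_betw_cong[THEN iffD1, rotated]) (auto simp: phi_def inv_seq_000_R_def)
  moreover have "inv_seq_000 n = inv_seq_000_nonR n \<union> inv_seq_000_R n"
    by (auto simp: inv_seq_000_nonR_def inv_seq_000_R_def)
  ultimately show ?thesis by (auto intro: bij_betw_combine)
qed

lemma sig_bij_betw_nonR_Suc:
  assumes n: "1 \<le> n" and phi: "bij_betw (phi n) (inv_seq_000 n) (Dbar_sum n)"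
  shows "bij_betw (\<lambda>e. sig e (Suc n)) (inv_seq_000_nonR (Suc n)) (Dbar (Suc n))"
proof -
  let ?split = "\<lambda>e. (butlast e, the (wl e (Suc n)))"
  have "bij_betw (extend_dbar n \<circ> map_prod (phi n) id \<circ> ?split) (inv_seq_000_nonR (Suc n)) (Dbar (Suc n))"
    using bij_betw_nonR_Suc[OF n] bij_betw_map_prod[OF phi bij_betw_id] extend_dbar_bij[OF n]
    by (auto intro: bij_betw_trans)
  moreover have "(extend_dbar n \<circ> map_prod (phi n) id \<circ> ?split) e = sig e (Suc n)"
    if "e \<in> inv_seq_000_nonR (Suc n)" for e
  proof -
    from that have e: "e \<in> inv_seq_000 (Suc n)" and nonR: "wl e (Suc n) \<noteq> None"
      by (auto simp: inv_seq_000_nonR_def)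
    obtain e' x where e': "e = e' @ [x]" "length e' = n" using e by (rule inv_seq_000_SucE)
    with nonR sig_snoc_letter[OF e'(2) n] show ?thesis by auto
  qed
  ultimately show ?thesis by (rule bij_betw_cong[THEN iffD1, rotated])
qed

lemma sig_bij_betw_R_Suc:
  assumes n: "1 \<le> n" and nonR: "bij_betw (\<lambda>e. sig e n) (inv_seq_000_nonR n) (Dbar n)"
  shows "bij_betw (\<lambda>e. sig e (Suc n)) (inv_seq_000_R (Suc n)) (Dbar n)"
proof -
  have "bij_betw ((\<lambda>e. sig e n) \<circ> butlast) (inv_seq_000_R (Suc n)) (Dbar n)"
    using bij_betw_butlast_R[OF n] nonR by (rule bij_betw_trans)
  moreover have "((\<lambda>e. sig e n) \<circ> butlast) e = sig e (Suc n)" if "e \<in> inv_seq_000_R (Suc n)" for e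
  proof -
    from that have e: "e \<in> inv_seq_000 (Suc n)" and R: "wl e (Suc n) = None"
      by (auto simp: inv_seq_000_R_def)
    obtain e' x where e': "e = e' @ [x]" "length e' = n" using e by (rule inv_seq_000_SucE)
    with R sig_snoc_R[OF e'(2) n] show ?thesis by simp
  qed
  ultimately show ?thesis by (rule bij_betw_cong[THEN iffD1, rotated])
qed

lemma sig_bij_betw_nonR_R:
  "1 \<le> n \<Longrightarrow> bij_betw (\<lambda>e. sig e n) (inv_seq_000_nonR n) (Dbar n)
           \<and> bij_betw (\<lambda>e. sig e n) (inv_seq_000_R n) (Dbar (n - 1))"
proof (induction n rule: nat_induct_at_least)
  case base
  have "inv_seq_000 1 = {[0]}" by (auto simp: inv_seq_000_def length_Suc_conv)
  then have "inv_seq_000_nonR 1 = {[0]}" "inv_seq_000_R 1 = {}"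
    by (auto simp: inv_seq_000_nonR_def inv_seq_000_R_def wl_def)
  moreover have "Dbar 1 = {id}" "Dbar 0 = {}" by (auto simp: Dbar_def)
  ultimately show ?case by (simp add: bij_betw_def id_def)
next
  case (Suc n)
  then show ?case
    using phi_bij_betw_if_sig_bij_betw sig_bij_betw_nonR_Suc sig_bij_betw_R_Suc by simp
qed

lemma finite_Dbar: "finite (Dbar n)"
  by (rule finite_subset[OF _ finite_permutations[of "{1..n}"]]) (auto simp: Dbar_def)

lemma card_Dbar: "card (Dbar n) = fact n - dn n"
proof -
  have "Dbar n = {p. p permutes {1..n}} - derangements n"
    and "derangements n \<subseteq> {p. p permutes {1..n}}"
    by (auto simp: Dbar_def derangements_def)
  then have "card (Dbar n) = card {p. p permutes {1..n}} - card (derangements n)"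
    by (metis card_Diff_subset finite_permutations finite_atLeastAtMost finite_subset)
  then show ?thesis by (simp add: card_permutations dn_def)
qed

theorem mainTheorem1:
  fixes n :: nat
  assumes "n \<ge> 1"
  shows "bij_betw (phi n) (inv_seq_000 n) (Inl ` Dbar n \<union> Inr ` Dbar (n - 1))
         \<and> card (inv_seq_000 n) = (fact n - dn n) + (fact (n - 1) - dn (n - 1))"
proof
  show bij: "bij_betw (phi n) (inv_seq_000 n) (Inl ` Dbar n \<union> Inr ` Dbar (n - 1))"
    using phi_bij_betw_if_sig_bij_betw sig_bij_betw_nonR_R[OF assms] by blast
  have "card (inv_seq_000 n) = card (Inl ` Dbar n \<union> Inr ` Dbar (n - 1))"
    using bij by (rule bij_betw_same_card)
  also have "\<dots> = card (Dbar n) + card (Dbar (n - 1))"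
    by (subst card_Un_disjoint) (auto simp: finite_Dbar card_image)
  finally show "card (inv_seq_000 n) = (fact n - dn n) + (fact (n - 1) - dn (n - 1))"
    by (simp add: card_Dbar)
qed

end
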